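(* Let $D\mapsto f_D\in\mathbb{H}$ be a functional summary on a collection $\mathcal{D}$ of datasets, and suppose there exist adjacent datasets $D_1,D_2\in\mathcal{D}$ with $f_{D_1}-f_{D_2}\in\mathcal{H}_C\setminus\mathcal{H}_{1,C}$. Let $Z$ be an ICLP with mean $0$ and covariance operator $C$. Then for every $\epsilon>0$ there is no $\sigma>0$ such that the mechanism $D\mapsto f_D+\sigma Z$ satisfies $\epsilon$-differential privacy.
   Context: $\mathbb{H}$ is a real separable infinite-dimensional Hilbert space. $C$ is a covariance operator on $\mathbb{H}$ with eigenvalues $\lambda_1\ge\lambda_2\ge\dots>0$ and eigenvectors $\{\phi_j\}_{j\ge1}$ forming an orthonormal basis of $\mathbb{H}$; $h_j=\langle h,\phi_j\rangle$. $\|h\|_C=(\sum_j h_j^2/\lambda_j)^{1/2}$, $\mathcal{H}_C=\{h:\|h\|_C<\infty\}$, $\|h\|_{1,C}=\sum_j|h_j|/\sqrt{\lambda_j}$, $\mathcal{H}_{1,C}=\{h:\|h\|_{1,C}<\infty\}\subseteq\mathcal{H}_C$. An ICLP with mean $\mu$ and covariance operator $C$ is the random element $\mu+\sum_{j\ge1}\sqrt{\lambda_j}Z_j\phi_j$ (series converging in $L^2(\Omega;\mathbb{H})$), where $Z_j$ are i.i.d. Laplace with mean $0$ and variance $1$, i.e. with density $\frac1{\sqrt2}e^{-\sqrt2|x|}$. Datasets $D,D'$ are adjacent if they differ in exactly one record. For a mechanism releasing the random element $\tilde f_D$, let $P_D$ be its law on the Borel $\sigma$-algebra of $\mathbb{H}$;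 the mechanism is $\epsilon$-differentially private if $P_D(A)\le e^{\epsilon}P_{D'}(A)$ for all adjacent $D,D'$ and all Borel $A\subseteq\mathbb{H}$. *)

theory Defs
  imports "HOL-Probability.Probability"
begin

text \<open>Covariance operator C on the Hilbert space with eigenvalues lam j (positive,
  non-increasing, summable = trace class) and eigenvectors phi j forming an orthonormal basis.\<close>
definition covariance_operator ::
  "('h::{real_inner,complete_space} \<Rightarrow> 'h) \<Rightarrow> (nat \<Rightarrow> real) \<Rightarrow> (nat \<Rightarrow> 'h) \<Rightarrow> bool" where
  "covariance_operator C lam phi \<longleftrightarrow>
     bounded_linear C \<and>
     (\<forall>i j. phi i \<bullet> phi j = (if i = j then 1 else 0)) \<and>
     (\<forall>h. (\<lambda>n. \<Sum>j<n. (h \<bullet> phi j) *\<^sub>R phi j) \<longlonglongrightarrow> h) \<and>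
     (\<forall>j. C (phi j) = lam j *\<^sub>R phi j) \<and>
     (\<forall>j. lam j > 0) \<and> antimono lam \<and> summable lam"

definition H_C :: "(nat \<Rightarrow> real) \<Rightarrow> (nat \<Rightarrow> 'h::real_inner) \<Rightarrow> 'h set" where
  "H_C lam phi = {h. summable (\<lambda>j. (h \<bullet> phi j)\<^sup>2 / lam j)}"

definition H_1C :: "(nat \<Rightarrow> real) \<Rightarrow> (nat \<Rightarrow> 'h::real_inner) \<Rightarrow> 'h set" where
  "H_1C lam phi = {h. summable (\<lambda>j. \<bar>h \<bullet> phi j\<bar> / sqrt (lam j))}"

text \<open>Laplace density with mean 0 and variance 1.\<close>
definition laplace_density :: "real \<Rightarrow> ennreal" where
  "laplace_density x = ennreal (exp (- sqrt 2 * \<bar>x\<bar>) / sqrt 2)"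

definition iid_laplace :: "'a measure \<Rightarrow> (nat \<Rightarrow> 'a \<Rightarrow> real) \<Rightarrow> bool" where
  "iid_laplace M Zs \<longleftrightarrow>
     prob_space.indep_vars M (\<lambda>_. borel) Zs UNIV \<and>
     (\<forall>j. distributed M lborel (Zs j) laplace_density)"

definition ICLP_partial ::
  "(nat \<Rightarrow> real) \<Rightarrow> (nat \<Rightarrow> 'h::real_normed_vector) \<Rightarrow> (nat \<Rightarrow> 'a \<Rightarrow> real) \<Rightarrow> nat \<Rightarrow> 'a \<Rightarrow> 'h" where
  "ICLP_partial lam phi Zs n \<omega> = (\<Sum>j<n. (sqrt (lam j) * Zs j \<omega>) *\<^sub>R phi j)"

definition is_ICLP ::
  "'a measure \<Rightarrow> 'h::real_normed_vector \<Rightarrow> (nat \<Rightarrow> real) \<Rightarrow> (nat \<Rightarrow> 'h) \<Rightarrow>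
   (nat \<Rightarrow> 'a \<Rightarrow> real) \<Rightarrow> ('a \<Rightarrow> 'h) \<Rightarrow> bool" where
  "is_ICLP M mu lam phi Zs Z \<longleftrightarrow>
     iid_laplace M Zs \<and> Z \<in> borel_measurable M \<and>
     (\<lambda>n. \<integral>\<^sup>+\<omega>. ennreal ((norm (Z \<omega> - (mu + ICLP_partial lam phi Zs n \<omega>)))\<^sup>2) \<partial>M)
        \<longlonglongrightarrow> 0"

definition adjacent :: "'r list \<Rightarrow> 'r list \<Rightarrow> bool" where
  "adjacent D D' \<longleftrightarrow> length D = length D' \<and> card {i. i < length D \<and> D ! i \<noteq> D' ! i} = 1"

definition eps_DP ::
  "'a measure \<Rightarrow> 'r list set \<Rightarrow> ('r list \<Rightarrow> 'a \<Rightarrow> 'h::topological_space) \<Rightarrow> real \<Rightarrow> bool" where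
  "eps_DP M Ds mech eps \<longleftrightarrow>
     (\<forall>D\<in>Ds. \<forall>D'\<in>Ds. adjacent D D' \<longrightarrow>
        (\<forall>A\<in>sets borel.
           measure (distr M borel (mech D)) A \<le> exp eps * measure (distr M borel (mech D')) A))"

end

theory Submission
  imports Defs
begin

text \<open>
  On the half-line from \<open>a\<close> away from the origin one has \<open>|y - a| = |y| - |a|\<close>, so there the
  Laplace density translated by \<open>a\<close> is exactly \<open>exp (sqrt 2 * |a|)\<close> times the untranslated one.
  Passing from \<open>f D\<^sub>2\<close> to \<open>f D\<^sub>1\<close> translates the \<open>j\<close>-th standardised coordinate of
  the output by \<open>a\<^sub>j = \<langle>f D\<^sub>1 - f D\<^sub>2, \<phi>\<^sub>j\<rangle> / (\<sigma> sqrt \<lambda>\<^sub>j)\<close>, and these coordinates are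
  independent Laplace variables. Hence on the cylinder set on which each of the first \<open>n\<close>
  coordinates lies in its half-line the two output laws differ by the factor
  \<open>exp (sqrt 2 * \<Sum>\<^sub>j\<^sub><\<^sub>n |a\<^sub>j|)\<close>, while both probabilities are positive. Since
  \<open>f D\<^sub>1 - f D\<^sub>2 \<notin> H_1C\<close>, this factor is unbounded in \<open>n\<close>.
\<close>

definition laplace_tail :: "real \<Rightarrow> real set" where
  "laplace_tail a = (if 0 \<le> a then {a..} else {..a})"

lemma laplace_tail_borel [measurable]: "laplace_tail a \<in> sets borel"
  by (simp add: laplace_tail_def)

lemma borel_measurable_laplace_density [measurable]: "laplace_density \<in> borel_measurable borel"
  unfolding laplace_density_def by measurable

lemma laplace_density_shift:
  assumes "y \<in> laplace_tail a"
  shows "laplace_density (y - a) = ennreal (exp (sqrt 2 * \<bar>a\<bar>)) * laplace_density y"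
proof -
  have "\<bar>y - a\<bar> = \<bar>y\<bar> - \<bar>a\<bar>"
    using assms by (auto simp: laplace_tail_def split: if_splits)
  then have "- sqrt 2 * \<bar>y - a\<bar> = sqrt 2 * \<bar>a\<bar> + - sqrt 2 * \<bar>y\<bar>"
    by (simp add: right_diff_distrib)
  then have "exp (- sqrt 2 * \<bar>y - a\<bar>) = exp (sqrt 2 * \<bar>a\<bar>) * exp (- sqrt 2 * \<bar>y\<bar>)"
    by (metis exp_add)
  then show ?thesis
    by (simp add: laplace_density_def ennreal_mult [symmetric])
qed

lemma emeasure_laplace_shift_tail:
  assumes "distributed M lborel X laplace_density"
  shows "emeasure M ((\<lambda>\<omega>. a + X \<omega>) -` laplace_tail a \<inter> space M) =
         ennreal (exp (sqrt 2 * \<bar>a\<bar>)) * emeasure M (X -` laplace_tail a \<inter> space M)"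
proof -
  have "(\<lambda>\<omega>. a + X \<omega>) -` laplace_tail a \<inter> space M = X -` {x. a + x \<in> laplace_tail a} \<inter> space M"
    by auto
  also have "emeasure M \<dots> = (\<integral>\<^sup>+x. laplace_density x * indicator {x. a + x \<in> laplace_tail a} x \<partial>lborel)"
    using assms by (intro distributed_emeasure) measurable
  also have "\<dots> = (\<integral>\<^sup>+x. laplace_density (a + x - a) * indicator (laplace_tail a) (a + 1 * x) \<partial>lborel)"
    by (simp add: indicator_def)
  also have "\<dots> = (\<integral>\<^sup>+y. laplace_density (y - a) * indicator (laplace_tail a) y \<partial>lborel)"
    by (subst nn_integral_real_affine [where c = 1 and t = a]) auto
  also have "\<dots> = (\<integral>\<^sup>+y. ennreal (exp (sqrt 2 * \<bar>a\<bar>)) * (laplace_density y * indicator (laplace_tail a) y) \<partial>lborel)"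
    by (intro nn_integral_cong) (auto simp: indicator_def laplace_density_shift)
  also have "\<dots> = ennreal (exp (sqrt 2 * \<bar>a\<bar>)) * emeasure M (X -` laplace_tail a \<inter> space M)"
    using assms by (simp add: nn_integral_cmult distributed_emeasure)
  finally show ?thesis .
qed

lemma emeasure_laplace_tail_pos:
  assumes "distributed M lborel X laplace_density"
  shows "emeasure M (X -` laplace_tail a \<inter> space M) > 0"
proof -
  define I where "I = (if 0 \<le> a then {a..a+1} else {a-1..a})"
  define c where "c = exp (- sqrt 2 * (\<bar>a\<bar> + 1)) / sqrt 2"
  have "c > 0"
    by (simp add: c_def)
  then have "0 < (\<integral>\<^sup>+x. ennreal c * indicator I x \<partial>lborel)"
    by (simp add: nn_integral_cmult I_def)
  also have "\<dots> \<le> (\<integral>\<^sup>+x. laplace_density x * indicator (laplace_tail a) x \<partial>lborel)"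
  proof (intro nn_integral_mono)
    fix x
    show "ennreal c * indicator I x \<le> laplace_density x * indicator (laplace_tail a) x"
    proof (cases "x \<in> I")
      case True
      then have "x \<in> laplace_tail a" "\<bar>x\<bar> \<le> \<bar>a\<bar> + 1"
        by (auto simp: I_def laplace_tail_def split: if_splits)
      then show ?thesis
        by (simp add: laplace_density_def indicator_def c_def divide_right_mono)
    qed simp
  qed
  also have "\<dots> = emeasure M (X -` laplace_tail a \<inter> space M)"
    using assms by (simp add: distributed_emeasure)
  finally show ?thesis .
qed

lemma not_summable_partial_sums_unbounded:
  fixes f :: "nat \<Rightarrow> real"
  assumes "\<And>n. 0 \<le> f n" and "\<not> summable f"
  shows "\<exists>n. x < (\<Sum>i<n. f i)"
  using summableI_nonneg_bounded [of f x] assms by (meson not_le)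

lemma inner_ICLP_partial:
  assumes orth: "\<And>i j. phi i \<bullet> phi j = (if i = j then 1 else 0)" and "j < n"
  shows "ICLP_partial lam phi Zs n \<omega> \<bullet> phi j = sqrt (lam j) * Zs j \<omega>"
proof -
  have "ICLP_partial lam phi Zs n \<omega> \<bullet> phi j = (\<Sum>i<n. if i = j then sqrt (lam i) * Zs i \<omega> else 0)"
    unfolding ICLP_partial_def inner_sum_left by (intro sum.cong) (auto simp: orth)
  also have "\<dots> = sqrt (lam j) * Zs j \<omega>"
    using \<open>j < n\<close> by (simp add: sum.delta')
  finally show ?thesis .
qed

lemma ICLP_inner_basis_AE:
  fixes phi :: "nat \<Rightarrow> 'h::{real_inner,second_countable_topology}"
  assumes orth: "\<And>i j. phi i \<bullet> phi j = (if i = j then 1 else 0)"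
    and ICLP: "is_ICLP M mu lam phi Zs Z"
  shows "AE \<omega> in M. (Z \<omega> - mu) \<bullet> phi j = sqrt (lam j) * Zs j \<omega>"
proof -
  have [measurable]: "Z \<in> borel_measurable M" "Zs j \<in> borel_measurable M"
    using ICLP distributed_measurable [of M lborel "Zs j" laplace_density]
    by (auto simp: is_ICLP_def iid_laplace_def)
  define err where "err \<omega> = ((Z \<omega> - mu) \<bullet> phi j - sqrt (lam j) * Zs j \<omega>)\<^sup>2" for \<omega>
  define L2_dist where
    "L2_dist = (\<lambda>n. \<integral>\<^sup>+\<omega>. ennreal ((norm (Z \<omega> - (mu + ICLP_partial lam phi Zs n \<omega>)))\<^sup>2) \<partial>M)"
  have "L2_dist \<longlonglongrightarrow> 0"
    using ICLP by (simp add: is_ICLP_def L2_dist_def)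
  moreover have "(\<integral>\<^sup>+\<omega>. ennreal (err \<omega>) \<partial>M) \<le> L2_dist n" if "j < n" for n
    unfolding L2_dist_def
  proof (intro nn_integral_mono ennreal_leI)
    fix \<omega>
    let ?r = "Z \<omega> - (mu + ICLP_partial lam phi Zs n \<omega>)"
    have "?r \<bullet> phi j = (Z \<omega> - mu) \<bullet> phi j - sqrt (lam j) * Zs j \<omega>"
      using inner_ICLP_partial [OF orth that] by (simp add: inner_diff_left inner_add_left)
    moreover have "\<bar>?r \<bullet> phi j\<bar> \<le> norm ?r"
      using Cauchy_Schwarz_ineq2 [of ?r "phi j"] orth by (simp add: norm_eq_sqrt_inner)
    ultimately show "err \<omega> \<le> (norm ?r)\<^sup>2"
      unfolding err_def by (metis abs_ge_zero power2_abs power_mono)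
  qed
  ultimately have "(\<integral>\<^sup>+\<omega>. ennreal (err \<omega>) \<partial>M) \<le> 0"
    by (intro tendsto_lowerbound) (auto simp: eventually_sequentially intro!: exI [of _ "Suc j"])
  then have "(\<integral>\<^sup>+\<omega>. ennreal (err \<omega>) \<partial>M) = 0"
    by simp
  then have "AE \<omega> in M. ennreal (err \<omega>) = 0"
    by (subst (asm) nn_integral_0_iff_AE) (auto simp: err_def)
  then show ?thesis
    by eventually_elim (simp add: err_def)
qed

lemma measure_ICLP_cylinder:
  fixes phi :: "nat \<Rightarrow> 'h::{real_inner,second_countable_topology}"
  assumes orth: "\<And>i j. phi i \<bullet> phi j = (if i = j then 1 else 0)"
    and lam_pos: "\<And>j. lam j > 0" and "prob_space M" and ICLP: "is_ICLP M 0 lam phi Zs Z"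
    and "\<sigma> > 0" and "n \<noteq> 0" and [measurable]: "\<And>j. B j \<in> sets borel"
  shows "measure (distr M borel (\<lambda>\<omega>. y + \<sigma> *\<^sub>R Z \<omega>))
           {x. \<forall>j<n. ((x - b) \<bullet> phi j) / (\<sigma> * sqrt (lam j)) \<in> B j}
       = (\<Prod>j<n. measure M (Zs j -` {t. ((y - b) \<bullet> phi j) / (\<sigma> * sqrt (lam j)) + t \<in> B j} \<inter> space M))"
    (is "_ = (\<Prod>j<n. measure M (Zs j -` ?S j \<inter> space M))")
proof -
  interpret prob_space M by fact
  have iid: "iid_laplace M Zs" and [measurable]: "Z \<in> borel_measurable M"
    using ICLP by (auto simp: is_ICLP_def)
  have [measurable]: "Zs j \<in> borel_measurable M" for j
    using iid distributed_measurable [of M lborel "Zs j" laplace_density] by (simp add: iid_laplace_def)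
  have S_borel: "?S j \<in> sets borel" for j
    by measurable
  let ?A = "{x. \<forall>j<n. ((x - b) \<bullet> phi j) / (\<sigma> * sqrt (lam j)) \<in> B j}"
  have "measure (distr M borel (\<lambda>\<omega>. y + \<sigma> *\<^sub>R Z \<omega>)) ?A
      = measure M ((\<lambda>\<omega>. y + \<sigma> *\<^sub>R Z \<omega>) -` ?A \<inter> space M)"
    by (intro measure_distr) measurable
  also have "\<dots> = measure M (\<Inter>j\<in>{..<n}. Zs j -` ?S j \<inter> space M)"
  proof (rule measure_eq_AE)
    have "AE \<omega> in M. \<forall>j\<in>{..<n}. Z \<omega> \<bullet> phi j = sqrt (lam j) * Zs j \<omega>"
      using ICLP_inner_basis_AE [OF orth ICLP] by (intro AE_finite_allI) auto
    then show "AE \<omega> in M. (\<omega> \<in> (\<lambda>\<omega>. y + \<sigma> *\<^sub>R Z \<omega>) -` ?A \<inter> space M)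
                        = (\<omega> \<in> (\<Inter>j\<in>{..<n}. Zs j -` ?S j \<inter> space M))"
    proof eventually_elim
      case (elim \<omega>)
      have "((y + \<sigma> *\<^sub>R Z \<omega> - b) \<bullet> phi j) / (\<sigma> * sqrt (lam j))
          = ((y - b) \<bullet> phi j) / (\<sigma> * sqrt (lam j)) + Zs j \<omega>" if "j < n" for j
        using elim that lam_pos [of j] \<open>\<sigma> > 0\<close>
        by (simp add: inner_diff_left inner_add_left field_simps)
      then show ?case
        using \<open>n \<noteq> 0\<close> by auto
    qed
    show "(\<lambda>\<omega>. y + \<sigma> *\<^sub>R Z \<omega>) -` ?A \<inter> space M \<in> sets M"
      by measurable
    show "(\<Inter>j\<in>{..<n}. Zs j -` ?S j \<inter> space M) \<in> sets M"
      using \<open>n \<noteq> 0\<close> S_borel by (intro sets.finite_INT) auto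
  qed
  also have "\<dots> = (\<Prod>j<n. measure M (Zs j -` ?S j \<inter> space M))"
    using iid \<open>n \<noteq> 0\<close> S_borel
    by (intro indep_varsD [where M' = "\<lambda>_. borel" and I = UNIV]) (auto simp: iid_laplace_def)
  finally show ?thesis .
qed

lemma ICLP_shift_likelihood_ratio:
  fixes phi :: "nat \<Rightarrow> 'h::{real_inner,second_countable_topology}"
  assumes orth: "\<And>i j. phi i \<bullet> phi j = (if i = j then 1 else 0)"
    and lam_pos: "\<And>j. lam j > 0" and "prob_space M" and ICLP: "is_ICLP M 0 lam phi Zs Z"
    and "\<sigma> > 0" and "n \<noteq> 0"
  obtains A where "A \<in> sets borel"
    and "measure (distr M borel (\<lambda>\<omega>. y1 + \<sigma> *\<^sub>R Z \<omega>)) A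
         = exp (sqrt 2 / \<sigma> * (\<Sum>j<n. \<bar>(y1 - y2) \<bullet> phi j\<bar> / sqrt (lam j)))
           * measure (distr M borel (\<lambda>\<omega>. y2 + \<sigma> *\<^sub>R Z \<omega>)) A"
    and "measure (distr M borel (\<lambda>\<omega>. y2 + \<sigma> *\<^sub>R Z \<omega>)) A > 0"
proof -
  interpret prob_space M by fact
  have laplace: "distributed M lborel (Zs j) laplace_density" for j
    using ICLP by (simp add: is_ICLP_def iid_laplace_def)
  define a where "a j = ((y1 - y2) \<bullet> phi j) / (\<sigma> * sqrt (lam j))" for j
  define A where "A = {x. \<forall>j<n. ((x - y2) \<bullet> phi j) / (\<sigma> * sqrt (lam j)) \<in> laplace_tail (a j)}"
  define p where "p j = measure M (Zs j -` laplace_tail (a j) \<inter> space M)" for j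
  have p_pos: "p j > 0" for j
    using emeasure_laplace_tail_pos [OF laplace] by (simp add: p_def emeasure_eq_measure)
  have shifted: "measure M (Zs j -` {t. a j + t \<in> laplace_tail (a j)} \<inter> space M) = exp (sqrt 2 * \<bar>a j\<bar>) * p j"
    for j
  proof -
    have "Zs j -` {t. a j + t \<in> laplace_tail (a j)} \<inter> space M = (\<lambda>\<omega>. a j + Zs j \<omega>) -` laplace_tail (a j) \<inter> space M"
      by auto
    then show ?thesis
      using emeasure_laplace_shift_tail [OF laplace, of "a j"]
      by (simp add: p_def emeasure_eq_measure ennreal_mult [symmetric])
  qed
  have cylinder: "measure (distr M borel (\<lambda>\<omega>. y + \<sigma> *\<^sub>R Z \<omega>)) A
      = (\<Prod>j<n. measure M (Zs j -` {t. ((y - y2) \<bullet> phi j) / (\<sigma> * sqrt (lam j)) + t \<in> laplace_tail (a j)} \<inter> space M))"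
    for y
    unfolding A_def
    by (rule measure_ICLP_cylinder [OF orth lam_pos \<open>prob_space M\<close> ICLP \<open>\<sigma> > 0\<close> \<open>n \<noteq> 0\<close>]) simp
  have "\<bar>a j\<bar> = \<bar>(y1 - y2) \<bullet> phi j\<bar> / sqrt (lam j) / \<sigma>" for j
    using lam_pos [of j] \<open>\<sigma> > 0\<close> by (simp add: a_def abs_divide abs_mult)
  then have "(\<Prod>j<n. exp (sqrt 2 * \<bar>a j\<bar>)) = exp (sqrt 2 / \<sigma> * (\<Sum>j<n. \<bar>(y1 - y2) \<bullet> phi j\<bar> / sqrt (lam j)))"
    by (simp add: exp_sum [symmetric] sum_distrib_left sum_divide_distrib mult.commute)
  moreover have "measure (distr M borel (\<lambda>\<omega>. y1 + \<sigma> *\<^sub>R Z \<omega>)) A = (\<Prod>j<n. exp (sqrt 2 * \<bar>a j\<bar>) * p j)"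
    using cylinder [of y1] unfolding a_def [symmetric] shifted .
  moreover have "measure (distr M borel (\<lambda>\<omega>. y2 + \<sigma> *\<^sub>R Z \<omega>)) A = (\<Prod>j<n. p j)"
    using cylinder [of y2] by (simp add: p_def)
  moreover have "A \<in> sets borel"
    unfolding A_def by measurable
  ultimately show ?thesis
    using that p_pos by (simp add: prod.distrib prod_pos)
qed

theorem theorem3:
  fixes C :: "'h::{real_inner,complete_space,second_countable_topology} \<Rightarrow> 'h"
    and lam :: "nat \<Rightarrow> real" and phi :: "nat \<Rightarrow> 'h"
    and f :: "'r list \<Rightarrow> 'h" and Ds :: "'r list set"
    and M :: "'a measure" and Zs :: "nat \<Rightarrow> 'a \<Rightarrow> real" and Z :: "'a \<Rightarrow> 'h"
    and D1 D2 :: "'r list" and \<epsilon> :: real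
  assumes "covariance_operator C lam phi"
    and "D1 \<in> Ds" and "D2 \<in> Ds" and "adjacent D1 D2"
    and "f D1 - f D2 \<in> H_C lam phi - H_1C lam phi"
    and "prob_space M"
    and "is_ICLP M 0 lam phi Zs Z"
    and "\<epsilon> > 0"
  shows "\<not> (\<exists>\<sigma>>0. eps_DP M Ds (\<lambda>D \<omega>. f D + \<sigma> *\<^sub>R Z \<omega>) \<epsilon>)"
proof
  assume "\<exists>\<sigma>>0. eps_DP M Ds (\<lambda>D \<omega>. f D + \<sigma> *\<^sub>R Z \<omega>) \<epsilon>"
  then obtain \<sigma> where "\<sigma> > 0" and DP: "eps_DP M Ds (\<lambda>D \<omega>. f D + \<sigma> *\<^sub>R Z \<omega>) \<epsilon>"
    by blast
  have orth: "\<And>i j. phi i \<bullet> phi j = (if i = j then 1 else 0)" and lam_pos: "\<And>j. lam j > 0"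
    using assms(1) by (auto simp: covariance_operator_def)
  let ?w = "\<lambda>j. \<bar>(f D1 - f D2) \<bullet> phi j\<bar> / sqrt (lam j)"
  have "\<not> summable ?w"
    using assms(5) by (simp add: H_1C_def)
  then have "\<exists>n. \<sigma> * \<epsilon> / sqrt 2 < (\<Sum>j<n. ?w j)"
    using lam_pos by (intro not_summable_partial_sums_unbounded) (simp_all add: less_imp_le)
  then obtain n where n: "\<sigma> * \<epsilon> / sqrt 2 < (\<Sum>j<n. ?w j)"
    by blast
  moreover have "\<sigma> * \<epsilon> / sqrt 2 > 0"
    using \<open>\<sigma> > 0\<close> \<open>\<epsilon> > 0\<close> by simp
  ultimately have "n \<noteq> 0"
    by (intro notI) simp
  obtain A where "A \<in> sets borel"
    and "measure (distr M borel (\<lambda>\<omega>. f D1 + \<sigma> *\<^sub>R Z \<omega>)) A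
          = exp (sqrt 2 / \<sigma> * (\<Sum>j<n. ?w j)) * measure (distr M borel (\<lambda>\<omega>. f D2 + \<sigma> *\<^sub>R Z \<omega>)) A"
    and "measure (distr M borel (\<lambda>\<omega>. f D2 + \<sigma> *\<^sub>R Z \<omega>)) A > 0"
    by (rule ICLP_shift_likelihood_ratio [OF orth lam_pos assms(6,7) \<open>\<sigma> > 0\<close> \<open>n \<noteq> 0\<close>])
  moreover have "measure (distr M borel (\<lambda>\<omega>. f D1 + \<sigma> *\<^sub>R Z \<omega>)) A
                 \<le> exp \<epsilon> * measure (distr M borel (\<lambda>\<omega>. f D2 + \<sigma> *\<^sub>R Z \<omega>)) A"
    using DP assms(2-4) \<open>A \<in> sets borel\<close> unfolding eps_DP_def by blast
  ultimately have "sqrt 2 / \<sigma> * (\<Sum>j<n. ?w j) \<le> \<epsilon>"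
    by simp
  then show False
    using n \<open>\<sigma> > 0\<close> by (simp add: field_simps)
qed

end
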